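(* Let $(x,P)$ be a mechanism satisfying the incentive compatibility constraints, and let $v(\theta)=CPT(\theta,x(\theta),P_\theta)$. Define \[P^*_\theta(y)=\begin{cases}0 & \text{if } y\ge\frac{\mu^*}{\lambda p^*}\big(\theta w_+(x(\theta))-v(\theta)\big),\\ p^* & \text{if } y<\frac{\mu^*}{\lambda p^*}\big(\theta w_+(x(\theta))-v(\theta)\big).\end{cases}\] Then the mechanism $(x,P^* )$ is incentive compatible and yields expected profit at least as high as $(x,P)$.
   Context: $\lambda>0$; $w_+,w_-:[0,1]\to[0,1]$ strictly increasing, thrice differentiable, $w_\pm(0)=0$, $w_\pm(1)=1$, $w_\pm'(0),w_\pm'(1)>1$, $w_\pm'''>0$. $\mu^*=\max_{p\in(0,1]}p/w_-(p)$ and $p^*\in(0,1)$ is the unique point with $\mu^*w_-(p^* )=p^*$. The buyer's value $\theta\in[\underline\theta,\overline\theta]$ is private, with prior $F$ having positive density $f$. A (direct) mechanism $(x,P)$ specifies for each reported type $\theta$ a delivery probability $x(\theta)\in[0,1]$ and the tail $P_\theta(y)=P(T(\theta)>y)$ of a nonnegative random price $T(\theta)$. $CPT(\theta,x,P)=\theta w_+(x)-\lambda\int_0^\infty w_-(P(y))dy$. Incentive compatibility: $CPT(\theta,x(\theta),P_\theta)\ge CPT(\theta,x(\hat\theta),P_{\hat\theta})$ for all $\theta,\hat\theta$. Expected profit: $\int_{\underline\theta}^{\overline\theta}\int_0^\infty P_\theta(y)dy\,f(\theta)d\theta$. *)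

theory Defs
  imports "HOL-Probability.Probability"
begin

definition prob_weight :: "(real \<Rightarrow> real) \<Rightarrow> bool" where
  "prob_weight w \<longleftrightarrow>
     strict_mono_on {0..1} w \<and> w ` {0..1} \<subseteq> {0..1} \<and> w 0 = 0 \<and> w 1 = 1 \<and>
     (\<exists>w1 w2 w3. (\<forall>p\<in>{0..1}.
         (w has_real_derivative w1 p) (at p within {0..1}) \<and>
         (w1 has_real_derivative w2 p) (at p within {0..1}) \<and>
         (w2 has_real_derivative w3 p) (at p within {0..1}) \<and> w3 p > 0)
       \<and> w1 0 > 1 \<and> w1 1 > 1)"

definition mu_star :: "(real \<Rightarrow> real) \<Rightarrow> real" where
  "mu_star w = (SUP p\<in>{0<..1}. p / w p)"

definition p_star :: "(real \<Rightarrow> real) \<Rightarrow> real" where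
  "p_star w = (THE p. p \<in> {0<..<1} \<and> mu_star w * w p = p)"

definition is_price_tail :: "(real \<Rightarrow> real) \<Rightarrow> bool" where
  "is_price_tail P \<longleftrightarrow>
     (\<exists>M :: real measure. prob_space M \<and> sets M = sets borel \<and> (AE t in M. 0 \<le> t) \<and>
        (\<forall>y\<ge>0. P y = measure M {t. y < t}))"

definition CPT :: "real \<Rightarrow> (real \<Rightarrow> real) \<Rightarrow> (real \<Rightarrow> real) \<Rightarrow> real \<Rightarrow> real \<Rightarrow> (real \<Rightarrow> real) \<Rightarrow> real" where
  "CPT lam wp wm \<theta> q P = \<theta> * wp q - lam * (LINT y:{0..}|lborel. wm (P y))"

definition mechanism :: "real \<Rightarrow> real \<Rightarrow> (real \<Rightarrow> real) \<Rightarrow> (real \<Rightarrow> real \<Rightarrow> real) \<Rightarrow> bool" where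
  "mechanism thl thh x P \<longleftrightarrow>
     (\<forall>\<theta>\<in>{thl..thh}. x \<theta> \<in> {0..1} \<and> is_price_tail (P \<theta>) \<and>
        set_integrable lborel {0..} (P \<theta>))"

definition incentive_compatible ::
  "real \<Rightarrow> (real \<Rightarrow> real) \<Rightarrow> (real \<Rightarrow> real) \<Rightarrow> real \<Rightarrow> real \<Rightarrow> (real \<Rightarrow> real) \<Rightarrow> (real \<Rightarrow> real \<Rightarrow> real) \<Rightarrow> bool" where
  "incentive_compatible lam wp wm thl thh x P \<longleftrightarrow>
     (\<forall>\<theta>\<in>{thl..thh}. \<forall>\<theta>'\<in>{thl..thh}.
        CPT lam wp wm \<theta> (x \<theta>') (P \<theta>') \<le> CPT lam wp wm \<theta> (x \<theta>) (P \<theta>))"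

definition expected_profit :: "real \<Rightarrow> real \<Rightarrow> (real \<Rightarrow> real) \<Rightarrow> (real \<Rightarrow> real \<Rightarrow> real) \<Rightarrow> ennreal" where
  "expected_profit thl thh f P =
     (\<integral>\<^sup>+ \<theta>. indicator {thl..thh} \<theta> * ennreal ((LINT y:{0..}|lborel. P \<theta> y) * f \<theta>) \<partial>lborel)"

end

theory Submission
  imports Defs
begin

text \<open>Since mu* = max p / w(p), every p in [0,1] satisfies p \<le> mu* w(p), with equality
  at p*. Integrating over the tail of any price gives E[T] = \<integral>P \<le> mu* \<integral>w(P).
  The binary price equal to b = mu* \<integral>w(P) / p* with probability p* and to 0 otherwise
  has the same distortion cost w(p*) b = \<integral>w(P), so every type's CPT value of every
  report is unchanged and incentive compatibility survives, while its expectation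
  p* b = mu* \<integral>w(P) is at least E[T].
  That the maximum defining mu* sits at a unique interior point uses w'(0), w'(1) > 1
  (the quotient p / w(p) is below 1 near 0 and above 1 near 1) and w''' > 0 (two interior
  fixed points would give w''' a zero by repeated use of Rolle's theorem).\<close>

lemma Rolle_within_Icc:
  fixes f :: "real \<Rightarrow> real"
  assumes deriv: "\<forall>p\<in>{l..u}. (f has_real_derivative f' p) (at p within {l..u})"
    and "l \<le> a" "a < b" "b \<le> u" "f a = f b"
  obtains z where "a < z" "z < b" "f' z = 0"
proof -
  have "continuous_on {a..b} f"
    using continuous_on_subset[OF DERIV_continuous_on] deriv assms by fastforce
  moreover have der: "(f has_real_derivative f' z) (at z)" if "a < z" "z < b" for z
    using deriv that assms
    by (metis at_within_Icc_at atLeastAtMost_iff less_le_trans le_less_trans less_imp_le)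
  ultimately obtain z where "a < z" "z < b" "(f has_real_derivative 0) (at z)"
    using Rolle[OF \<open>a < b\<close> \<open>f a = f b\<close>] real_differentiable_def by blast
  then show thesis
    using that der DERIV_unique by blast
qed

lemma nonneg_zero_unique_if_third_derivative_pos:
  fixes g :: "real \<Rightarrow> real"
  assumes d1: "\<forall>p\<in>{l..u}. (g has_real_derivative g1 p) (at p within {l..u})"
    and d2: "\<forall>p\<in>{l..u}. (g1 has_real_derivative g2 p) (at p within {l..u})"
    and d3: "\<forall>p\<in>{l..u}. (g2 has_real_derivative g3 p) (at p within {l..u})"
    and g3_pos: "\<forall>p\<in>{l..u}. g3 p > 0"
    and g_nonneg: "\<forall>p\<in>{l..u}. g p \<ge> 0" and "g l = 0"
    and zeros: "g p = 0" "g q = 0" "p \<in> {l<..u}" "q \<in> {l<..u}"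
  shows "p = q"
proof -
  \<comment> \<open>Two such zeros p < q force g1 to vanish at three points (the interior minimum p and
    one Rolle point on each side), hence g3 to vanish somewhere.\<close>
  have False if pq: "l < p" "p < q" "q \<le> u" "g p = 0" "g q = 0" for p q
  proof -
    have der: "(g has_real_derivative g1 p) (at p)"
      using d1 pq by (metis at_within_Icc_at atLeastAtMost_iff less_le_trans less_imp_le)
    have min: "\<forall>y. \<bar>p - y\<bar> < min (p - l) (u - p) \<longrightarrow> g p \<le> g y"
      using g_nonneg \<open>g p = 0\<close> by (auto simp: abs_less_iff)
    have "g1 p = 0"
      using DERIV_local_min[OF der _ min] pq by simp
    obtain a where a: "l < a" "a < p" "g1 a = 0"
      using Rolle_within_Icc[OF d1, of l p] pq \<open>g l = 0\<close> by auto
    obtain b where b: "p < b" "b < q" "g1 b = 0"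
      using Rolle_within_Icc[OF d1, of p q] pq by auto
    obtain c where c: "a < c" "c < p" "g2 c = 0"
      using Rolle_within_Icc[OF d2, of a p] a \<open>g1 p = 0\<close> pq by auto
    obtain d where d: "p < d" "d < b" "g2 d = 0"
      using Rolle_within_Icc[OF d2, of p b] b \<open>g1 p = 0\<close> pq by auto
    obtain e where "c < e" "e < d" "g3 e = 0"
      using Rolle_within_Icc[OF d3, of c d] a b c d pq by auto
    moreover have "e \<in> {l..u}"
      using calculation a b c d pq by auto
    ultimately show False
      using g3_pos by force
  qed
  with zeros show "p = q"
    by (metis greaterThanAtMost_iff linorder_neqE_linordered_idom)
qed

lemma difference_quotient_gt_nearby:
  fixes f :: "real \<Rightarrow> real"
  assumes "(f has_real_derivative D) (at a within S)" "c < D"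
  obtains d where "d > 0" "\<And>y. y \<in> S \<Longrightarrow> y \<noteq> a \<Longrightarrow> dist y a < d \<Longrightarrow> c < (f y - f a) / (y - a)"
proof -
  have "((\<lambda>y. (f y - f a) / (y - a)) \<longlongrightarrow> D) (at a within S)"
    using assms(1) has_field_derivative_iff by blast
  then have "\<forall>\<^sub>F y in at a within S. c < (f y - f a) / (y - a)"
    using order_tendstoD(1) assms(2) by blast
  then show thesis
    using that unfolding eventually_at by blast
qed

lemma prob_weightE:
  assumes "prob_weight w"
  obtains w1 w2 w3 where
    "\<forall>p\<in>{0..1}. (w has_real_derivative w1 p) (at p within {0..1})"
    "\<forall>p\<in>{0..1}. (w1 has_real_derivative w2 p) (at p within {0..1})"
    "\<forall>p\<in>{0..1}. (w2 has_real_derivative w3 p) (at p within {0..1})"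
    "\<forall>p\<in>{0..1}. w3 p > 0" "w1 0 > 1" "w1 1 > 1"
  using assms unfolding prob_weight_def by blast

lemma prob_weight_continuous:
  assumes "prob_weight w"
  shows "continuous_on {0..1} w"
  using assms by (elim prob_weightE) (auto intro: DERIV_continuous_on)

lemma prob_weight_pos:
  assumes "prob_weight w" "0 < p" "p \<le> 1"
  shows "0 < w p"
proof -
  have "strict_mono_on {0..1} w" "w 0 = 0"
    using assms(1) unfolding prob_weight_def by auto
  then show ?thesis
    using strict_mono_onD[of "{0..1}" w 0 p] assms by auto
qed

lemma prob_weight_nonneg:
  assumes "prob_weight w" "0 \<le> p" "p \<le> 1"
  shows "0 \<le> w p"
proof -
  have "w ` {0..1} \<subseteq> {0..1}"
    using assms(1) unfolding prob_weight_def by blast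
  then show ?thesis
    using assms(2,3) by force
qed

lemma prob_weight_le_linear:
  assumes "prob_weight w"
  obtains K where "\<forall>t\<in>{0..1}. w t \<le> K * t"
proof -
  obtain w1 w2 where d1: "\<forall>p\<in>{0..1}. (w has_real_derivative w1 p) (at p within {0..1})"
    and d2: "\<forall>p\<in>{0..1}. (w1 has_real_derivative w2 p) (at p within {0..1})"
    using assms by (elim prob_weightE)
  have "bounded (w1 ` {0..1})"
    using d2 by (intro compact_imp_bounded compact_continuous_image DERIV_continuous_on) auto
  then obtain K where K: "\<forall>p\<in>{0..1}. norm (w1 p) \<le> K"
    unfolding bounded_iff by auto
  have "w t \<le> K * t" if "t \<in> {0..1}" for t
  proof -
    have "norm (w t - w 0) \<le> K * norm (t - 0)"
      by (rule field_differentiable_bound[of "{0..1}"]) (use d1 K that in auto)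
    moreover have "w 0 = 0"
      using assms unfolding prob_weight_def by blast
    ultimately show ?thesis
      using that by simp
  qed
  then show thesis
    using that by blast
qed

lemma prob_weight_above_diagonal_near_0:
  assumes "prob_weight w"
  obtains e where "0 < e" "e \<le> 1" "\<And>p. 0 < p \<Longrightarrow> p < e \<Longrightarrow> p < w p"
proof -
  obtain w1 where "(w has_real_derivative w1 0) (at 0 within {0..1})" "w1 0 > 1"
    using assms by (elim prob_weightE) (meson atLeastAtMost_iff order_refl zero_le_one)
  then obtain d where "d > 0"
    and d: "\<And>y. y \<in> {0..1} \<Longrightarrow> y \<noteq> 0 \<Longrightarrow> dist y 0 < d \<Longrightarrow> 1 < (w y - w 0) / (y - 0)"
    by (rule difference_quotient_gt_nearby) auto
  have "p < w p" if "0 < p" "p < min d 1" for p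
    using d[of p] that assms unfolding prob_weight_def by (simp add: less_divide_eq_1_pos)
  then show thesis
    using that[of "min d 1"] \<open>d > 0\<close> by simp
qed

lemma prob_weight_below_diagonal_near_1:
  assumes "prob_weight w"
  obtains q where "0 < q" "q < 1" "w q < q"
proof -
  obtain w1 where "(w has_real_derivative w1 1) (at 1 within {0..1})" "w1 1 > 1"
    using assms by (elim prob_weightE) (meson atLeastAtMost_iff order_refl zero_le_one)
  then obtain d where "d > 0"
    and d: "\<And>y. y \<in> {0..1} \<Longrightarrow> y \<noteq> 1 \<Longrightarrow> dist y 1 < d \<Longrightarrow> 1 < (w y - w 1) / (y - 1)"
    by (rule difference_quotient_gt_nearby) auto
  define q where "q = max (1/2) (1 - d/2)"
  have q: "0 < q" "q < 1"
    using \<open>d > 0\<close> by (auto simp: q_def)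
  then have "1 < (w q - 1) / (q - 1)"
    using d[of q] \<open>d > 0\<close> assms unfolding prob_weight_def by (auto simp: q_def dist_real_def)
  then have "w q < q"
    using q by (simp add: less_divide_eq_1_neg)
  with q show thesis ..
qed

lemma mu_star_attained:
  assumes w: "prob_weight w"
  obtains p0 where "p0 \<in> {0<..<1}" "mu_star w = p0 / w p0" "1 < mu_star w"
    "\<forall>p\<in>{0<..1}. p / w p \<le> mu_star w"
proof -
  define h where "h p = p / w p" for p
  obtain e where e: "0 < e" "e \<le> 1" and diag: "\<And>p. 0 < p \<Longrightarrow> p < e \<Longrightarrow> p < w p"
    using prob_weight_above_diagonal_near_0[OF w] by blast
  have below_1: "h p < 1" if "0 < p" "p < e" for p
    using diag[OF that] prob_weight_pos[OF w, of p] that e by (simp add: h_def)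
  obtain q where q: "0 < q" "q < 1" "w q < q"
    using prob_weight_below_diagonal_near_1[OF w] by blast
  have "1 < h q"
    using prob_weight_pos[OF w, of q] q by (simp add: h_def less_divide_eq_1_pos)
  have "w p \<noteq> 0" if "p \<in> {e..1}" for p
    using prob_weight_pos[OF w, of p] that e by auto
  then have "continuous_on {e..1} h"
    unfolding h_def using e
    by (intro continuous_on_divide continuous_on_id
        continuous_on_subset[OF prob_weight_continuous[OF w]]) auto
  then obtain p0 where p0: "p0 \<in> {e..1}" and max_e: "\<forall>p\<in>{e..1}. h p \<le> h p0"
    using continuous_attains_sup[of "{e..1}" h] e by auto
  have "h 1 = 1"
    using w unfolding h_def prob_weight_def by simp
  have max: "h p \<le> h p0" if "p \<in> {0<..1}" for p
  proof (cases "p < e")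
    case True
    then have "h p < h 1"
      using below_1 that \<open>h 1 = 1\<close> by simp
    also have "h 1 \<le> h p0"
      using max_e e by simp
    finally show ?thesis
      by simp
  qed (use max_e that in auto)
  then have "1 < h p0"
    using q \<open>1 < h q\<close> by force
  with p0 \<open>h 1 = 1\<close> e have "p0 \<in> {0<..<1}"
    by (cases "p0 = 1") auto
  moreover have "mu_star w = h p0"
    unfolding mu_star_def h_def[symmetric]
    using max \<open>p0 \<in> {0<..<1}\<close> by (intro cSup_eq_maximum) auto
  ultimately show thesis
    using that \<open>1 < h p0\<close> max unfolding h_def by simp
qed

lemma mu_star_gt_1:
  assumes "prob_weight w"
  shows "1 < mu_star w"
  by (rule mu_star_attained[OF assms])

lemma le_mu_star_mult:
  assumes w: "prob_weight w" and p: "0 \<le> p" "p \<le> 1"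
  shows "p \<le> mu_star w * w p"
proof (cases "p = 0")
  case False
  have "\<forall>p\<in>{0<..1}. p / w p \<le> mu_star w"
    by (rule mu_star_attained[OF w])
  then have "p / w p \<le> mu_star w" "0 < w p"
    using False prob_weight_pos[OF w] p by auto
  then show ?thesis
    by (simp add: pos_divide_le_eq)
qed (use w in \<open>simp add: prob_weight_def\<close>)

lemma p_star_fixed_point:
  assumes w: "prob_weight w"
  shows "p_star w \<in> {0<..<1}" "mu_star w * w (p_star w) = p_star w"
proof -
  obtain p0 where p0: "p0 \<in> {0<..<1}" "mu_star w = p0 / w p0"
    using mu_star_attained[OF w] by blast
  then have fixed: "mu_star w * w p0 = p0"
    using prob_weight_pos[OF w, of p0] by simp
  obtain w1 w2 w3 where
    d1: "\<forall>p\<in>{0..1}. (w has_real_derivative w1 p) (at p within {0..1})" and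
    d2: "\<forall>p\<in>{0..1}. (w1 has_real_derivative w2 p) (at p within {0..1})" and
    d3: "\<forall>p\<in>{0..1}. (w2 has_real_derivative w3 p) (at p within {0..1})" and
    pos: "\<forall>p\<in>{0..1}. w3 p > 0"
    using w by (elim prob_weightE)
  define g where "g p = mu_star w * w p - p" for p
  have "p = p0" if "p \<in> {0<..<1}" "mu_star w * w p = p" for p
  proof (rule nonneg_zero_unique_if_third_derivative_pos[of 0 1 g])
    show "\<forall>p\<in>{0..1}. (g has_real_derivative mu_star w * w1 p - 1) (at p within {0..1})"
      using d1 unfolding g_def by (auto intro!: derivative_eq_intros)
    show "\<forall>p\<in>{0..1}. ((\<lambda>p. mu_star w * w1 p - 1) has_real_derivative mu_star w * w2 p) (at p within {0..1})"
      using d2 by (auto intro!: derivative_eq_intros)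
    show "\<forall>p\<in>{0..1}. ((\<lambda>p. mu_star w * w2 p) has_real_derivative mu_star w * w3 p) (at p within {0..1})"
      using d3 by (auto intro!: derivative_eq_intros)
    show "\<forall>p\<in>{0..1}. 0 < mu_star w * w3 p"
      using pos mu_star_gt_1[OF w] by simp
    show "\<forall>p\<in>{0..1}. 0 \<le> g p"
      using le_mu_star_mult[OF w] by (simp add: g_def)
    show "g 0 = 0"
      using w by (simp add: g_def prob_weight_def)
  qed (use that p0 fixed in \<open>auto simp: g_def\<close>)
  then have "p_star w = p0"
    unfolding p_star_def using p0 fixed by (intro the_equality) auto
  then show "p_star w \<in> {0<..<1}" "mu_star w * w (p_star w) = p_star w"
    using p0 fixed by simp_all
qed

text \<open>The tail of the price that equals b with probability c and 0 otherwise.\<close>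
definition step_tail :: "real \<Rightarrow> real \<Rightarrow> real \<Rightarrow> real" where
  "step_tail b c y = (if b \<le> y then 0 else c)"

lemma step_tail_comp:
  assumes "g 0 = 0"
  shows "g (step_tail b c y) = step_tail b (g c) y"
  using assms by (simp add: step_tail_def)

lemma indicator_scaleR_step_tail:
  "indicator {0..} y *\<^sub>R step_tail b c y = c * indicator {0..<b} y"
  by (auto simp: step_tail_def indicator_def)

lemma set_integrable_step_tail:
  assumes "0 \<le> b"
  shows "set_integrable lborel {0..} (step_tail b c)"
  unfolding set_integrable_def indicator_scaleR_step_tail using assms by simp

lemma set_integral_step_tail:
  assumes "0 \<le> b"
  shows "(LINT y:{0..}|lborel. step_tail b c y) = c * b"
  unfolding set_lebesgue_integral_def indicator_scaleR_step_tail using assms by simp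

lemma is_price_tail_step_tail:
  assumes "0 \<le> b" "0 \<le> c" "c \<le> 1"
  shows "is_price_tail (step_tail b c)"
proof -
  define T where "T z = (if z then b else 0)" for z
  define M where "M = distr (measure_pmf (bernoulli_pmf c)) borel T"
  have T: "T \<in> measurable (measure_pmf (bernoulli_pmf c)) borel"
    by simp
  have "prob_space M"
    unfolding M_def by (rule prob_space.prob_space_distr[OF prob_space_measure_pmf T])
  moreover have "AE t in M. 0 \<le> t"
    unfolding M_def using assms by (subst AE_distr_iff[OF T]) (auto simp: T_def)
  moreover have "measure M {t. y < t} = step_tail b c y" if "0 \<le> y" for y
  proof -
    have "T -` {t. y < t} = (if b \<le> y then {} else {True})"
      using that by (auto simp: T_def)
    then show ?thesis
      unfolding M_def using assms
      by (simp add: measure_distr[OF T] measure_pmf_single step_tail_def)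
  qed
  ultimately show ?thesis
    unfolding is_price_tail_def by (metis M_def sets_distr)
qed

lemma price_tail_range:
  assumes "is_price_tail P" "0 \<le> y"
  shows "P y \<in> {0..1}"
  using assms prob_space.prob_le_1 unfolding is_price_tail_def by fastforce

lemma set_integrable_prob_weight_comp:
  assumes w: "prob_weight w" and Q: "set_integrable lborel {0..} Q"
    and Q_range: "\<And>y. 0 \<le> y \<Longrightarrow> Q y \<in> {0..1}"
  shows "set_integrable lborel {0..} (\<lambda>y. w (Q y))"
proof -
  obtain K where K: "\<forall>t\<in>{0..1}. w t \<le> K * t"
    using prob_weight_le_linear[OF w] by blast
  define g where "g y = indicator {0..} y *\<^sub>R Q y" for y
  have g: "integrable lborel g"
    using Q unfolding set_integrable_def g_def .
  have g_range: "g y \<in> {0..1}" for y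
    using Q_range by (simp add: g_def indicator_def)
  define wc where "wc t = w (max 0 (min 1 t))" for t
  have "continuous_on UNIV wc"
    unfolding wc_def
    by (rule continuous_on_compose2[OF prob_weight_continuous[OF w]]) (auto intro!: continuous_intros)
  then have "(\<lambda>y. wc (g y)) \<in> borel_measurable lborel"
    by (intro measurable_compose[OF borel_measurable_integrable[OF g]]
        borel_measurable_continuous_onI)
  moreover have "norm (wc (g y)) \<le> norm (K * g y)" for y
  proof -
    have "wc (g y) = w (g y)"
      using g_range[of y] by (simp add: wc_def)
    moreover have "0 \<le> w (g y)" "w (g y) \<le> K * g y"
      using K prob_weight_nonneg[OF w] g_range[of y] by auto
    ultimately show ?thesis
      by simp
  qed
  ultimately have "integrable lborel (\<lambda>y. wc (g y))"
    by (intro Bochner_Integration.integrable_bound[OF integrable_mult_right[OF g, of K]] AE_I2)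
  moreover have "indicator {0..} y *\<^sub>R w (Q y) = wc (g y)" for y
  proof (cases "0 \<le> y")
    case True
    then show ?thesis
      using Q_range[OF True] by (simp add: wc_def g_def)
  next
    case False
    then show ?thesis
      using w by (simp add: wc_def g_def prob_weight_def)
  qed
  ultimately show ?thesis
    unfolding set_integrable_def by simp
qed

lemma set_integral_le_mu_star_weighted:
  assumes w: "prob_weight w" and P: "is_price_tail P" "set_integrable lborel {0..} P"
  shows "(LINT y:{0..}|lborel. P y) \<le> mu_star w * (LINT y:{0..}|lborel. w (P y))"
proof -
  have "(LINT y:{0..}|lborel. P y) \<le> (LINT y:{0..}|lborel. mu_star w * w (P y))"
    using P price_tail_range[OF P(1)] le_mu_star_mult[OF w]
    by (intro set_integral_mono set_integrable_mult_right set_integrable_prob_weight_comp[OF w]) auto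
  then show ?thesis
    by simp
qed

lemma step_tail_replacement:
  assumes w: "prob_weight w" and P: "is_price_tail P" "set_integrable lborel {0..} P"
  defines "b \<equiv> mu_star w / p_star w * (LINT y:{0..}|lborel. w (P y))"
  shows "is_price_tail (step_tail b (p_star w))"
    and "set_integrable lborel {0..} (step_tail b (p_star w))"
    and "(LINT y:{0..}|lborel. w (step_tail b (p_star w) y)) = (LINT y:{0..}|lborel. w (P y))"
    and "(LINT y:{0..}|lborel. P y) \<le> (LINT y:{0..}|lborel. step_tail b (p_star w) y)"
proof -
  have ps: "0 < p_star w" "p_star w < 1" "mu_star w * w (p_star w) = p_star w"
    using p_star_fixed_point[OF w] by auto
  have "0 \<le> (LINT y:{0..}|lborel. w (P y))"
    unfolding set_lebesgue_integral_def using price_tail_range[OF P(1)] prob_weight_nonneg[OF w]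
    by (intro Bochner_Integration.integral_nonneg) (simp add: indicator_def)
  then have "0 \<le> b"
    unfolding b_def using ps mu_star_gt_1[OF w] by simp
  show "is_price_tail (step_tail b (p_star w))"
    using \<open>0 \<le> b\<close> ps by (intro is_price_tail_step_tail) auto
  show "set_integrable lborel {0..} (step_tail b (p_star w))"
    using \<open>0 \<le> b\<close> by (rule set_integrable_step_tail)
  have "w 0 = 0"
    using w by (simp add: prob_weight_def)
  then have "(LINT y:{0..}|lborel. w (step_tail b (p_star w) y)) = w (p_star w) * b"
    using \<open>0 \<le> b\<close> by (simp add: step_tail_comp set_integral_step_tail)
  also have "\<dots> = (LINT y:{0..}|lborel. w (P y))"
    unfolding b_def using ps by (simp add: field_simps)
  finally show "(LINT y:{0..}|lborel. w (step_tail b (p_star w) y)) = (LINT y:{0..}|lborel. w (P y))" .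
  have "(LINT y:{0..}|lborel. P y) \<le> mu_star w * (LINT y:{0..}|lborel. w (P y))"
    by (rule set_integral_le_mu_star_weighted[OF w P])
  also have "\<dots> = p_star w * b"
    unfolding b_def using ps by simp
  also have "\<dots> = (LINT y:{0..}|lborel. step_tail b (p_star w) y)"
    using \<open>0 \<le> b\<close> by (simp add: set_integral_step_tail)
  finally show "(LINT y:{0..}|lborel. P y) \<le> (LINT y:{0..}|lborel. step_tail b (p_star w) y)" .
qed

lemma expected_profit_mono:
  assumes "\<And>\<theta>. \<theta> \<in> {thl..thh} \<Longrightarrow> 0 \<le> f \<theta>"
    and "\<And>\<theta>. \<theta> \<in> {thl..thh} \<Longrightarrow> (LINT y:{0..}|lborel. P \<theta> y) \<le> (LINT y:{0..}|lborel. Q \<theta> y)"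
  shows "expected_profit thl thh f P \<le> expected_profit thl thh f Q"
  unfolding expected_profit_def
  using assms by (intro nn_integral_mono) (auto simp: indicator_def intro!: ennreal_leI mult_right_mono)

theorem lemma6:
  fixes lam thl thh :: real and wp wm f x :: "real \<Rightarrow> real"
    and P :: "real \<Rightarrow> real \<Rightarrow> real"
  assumes lam: "lam > 0"
    and wp: "prob_weight wp" and wm: "prob_weight wm"
    and thl_thh: "thl < thh"
    and f_pos: "\<forall>\<theta>\<in>{thl..thh}. f \<theta> > 0"
    and f_int: "set_integrable lborel {thl..thh} f"
    and f_one: "(LINT \<theta>:{thl..thh}|lborel. f \<theta>) = 1"
    and mech: "mechanism thl thh x P"
    and IC: "incentive_compatible lam wp wm thl thh x P"
  defines "Pstar \<equiv> (\<lambda>\<theta> y. if y \<ge> mu_star wm / (lam * p_star wm) * (\<theta> * wp (x \<theta>) - CPT lam wp wm \<theta> (x \<theta>) (P \<theta>))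
                        then 0 else p_star wm)"
  shows "mechanism thl thh x Pstar \<and> incentive_compatible lam wp wm thl thh x Pstar \<and>
         expected_profit thl thh f Pstar \<ge> expected_profit thl thh f P"
proof -
  have "Pstar \<theta> = step_tail (mu_star wm / p_star wm * (LINT y:{0..}|lborel. wm (P \<theta> y))) (p_star wm)"
    for \<theta>
    unfolding Pstar_def CPT_def step_tail_def using lam by (simp add: fun_eq_iff)
  then have replace: "is_price_tail (Pstar \<theta>)" "set_integrable lborel {0..} (Pstar \<theta>)"
      "CPT lam wp wm t q (Pstar \<theta>) = CPT lam wp wm t q (P \<theta>)"
      "(LINT y:{0..}|lborel. P \<theta> y) \<le> (LINT y:{0..}|lborel. Pstar \<theta> y)"
    if "\<theta> \<in> {thl..thh}" for \<theta> t q
    using step_tail_replacement[OF wm, of "P \<theta>"] mech that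
    unfolding mechanism_def CPT_def by auto
  have "mechanism thl thh x Pstar"
    using mech replace unfolding mechanism_def by blast
  moreover have "incentive_compatible lam wp wm thl thh x Pstar"
    using IC replace unfolding incentive_compatible_def by simp
  moreover have "expected_profit thl thh f P \<le> expected_profit thl thh f Pstar"
    using f_pos replace by (intro expected_profit_mono) (auto simp: less_imp_le)
  ultimately show ?thesis
    by simp
qed

end
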